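(* Let $N,l$ be positive integers with $l<N$, and let $\hat a(\xi)=\cos^{2N}(\xi/2)\sum_{j=0}^{l}\binom{N-1+j}{j}\sin^{2j}(\xi/2)$ be the mask of the pseudo spline of type II of order $(N,l)$. Then for all $\xi\in\mathbb R$, $$|\hat a(\xi)|\ge 1-C_1|\xi|^{2l+2},\qquad C_1=\frac{\sum_{j=l+1}^{N+l}\binom{N+l}{j}}{2^{2l+2}}.$$ *)

theory Defs
  imports Complex_Main
begin

definition pseudo_spline_II_mask :: "nat \<Rightarrow> nat \<Rightarrow> real \<Rightarrow> real" where
  "pseudo_spline_II_mask N l \<xi> =
     (cos (\<xi>/2)) ^ (2*N) * (\<Sum>j=0..l. real ((N - 1 + j) choose j) * (sin (\<xi>/2)) ^ (2*j))"

end

theory Submission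
  imports Defs
begin

text \<open>
  Put \<open>x = sin(\<xi>/2)^2\<close> and \<open>y = cos(\<xi>/2)^2\<close>, so \<open>x + y = 1\<close>. The mask is then the sum of
  the first \<open>l + 1\<close> terms of the binomial expansion of \<open>(x + y)^(N+l) = 1\<close>, so \<open>1\<close> minus the
  mask is the tail \<open>\<Sum>j=l+1..N+l. (N+l choose j) x^j y^(N+l-j)\<close>. Each tail term is at most
  \<open>(N+l choose j) x^(l+1)\<close>, and \<open>x \<le> (\<xi>/2)^2\<close> since \<open>|sin t| \<le> |t|\<close>.
\<close>

lemma binomial_partial_sum_Suc:
  fixes x y :: "'a::comm_semiring_1"
  shows "(\<Sum>j\<le>Suc l. of_nat (n + Suc l choose j) * x^j * y^(n + Suc l - j))
       = (x + y) * (\<Sum>j\<le>l. of_nat (n + l choose j) * x^j * y^(n + l - j))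
         + of_nat (n + l choose Suc l) * x^Suc l * y^n"
proof -
  define S where "S = (\<Sum>j\<le>l. of_nat (n + l choose j) * x^j * y^(n + l - j))"
  have shifted: "(\<Sum>j\<le>l. of_nat (n + l choose j) * x^Suc j * y^(n + l - j)) = x * S"
    unfolding S_def by (simp add: sum_distrib_left algebra_simps)
  have unshifted: "(\<Sum>j\<le>Suc l. of_nat (n + l choose j) * x^j * y^(n + Suc l - j))
      = y * S + of_nat (n + l choose Suc l) * x^Suc l * y^n"
  proof -
    have "(\<Sum>j\<le>l. of_nat (n + l choose j) * x^j * y^(n + Suc l - j)) = y * S"
      unfolding S_def sum_distrib_left
      by (intro sum.cong) (auto simp: Suc_diff_le algebra_simps)
    then show ?thesis by simp
  qed
  \<comment> \<open>Pascal's rule splits the left-hand side into the two sums above.\<close>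
  have "(\<Sum>j\<le>Suc l. of_nat (n + Suc l choose j) * x^j * y^(n + Suc l - j))
      = (y^(n + Suc l) + (\<Sum>j\<le>l. of_nat (n + l choose Suc j) * x^Suc j * y^(n + l - j)))
        + (\<Sum>j\<le>l. of_nat (n + l choose j) * x^Suc j * y^(n + l - j))"
    by (subst sum.atMost_Suc_shift) (simp add: sum.distrib algebra_simps)
  also have "y^(n + Suc l) + (\<Sum>j\<le>l. of_nat (n + l choose Suc j) * x^Suc j * y^(n + l - j))
      = (\<Sum>j\<le>Suc l. of_nat (n + l choose j) * x^j * y^(n + Suc l - j))"
    by (subst sum.atMost_Suc_shift) simp
  finally show ?thesis
    unfolding shifted unshifted S_def by (simp add: algebra_simps)
qed

lemma binomial_partial_sum_eq:
  fixes x y :: "'a::comm_semiring_1"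
  assumes "x + y = 1"
  shows "(\<Sum>j\<le>l. of_nat (Suc n + l choose j) * x^j * y^(Suc n + l - j))
       = y^Suc n * (\<Sum>j\<le>l. of_nat (n + j choose j) * x^j)"
proof (induction l)
  case (Suc l)
  then show ?case
    using binomial_partial_sum_Suc[of "Suc n" l x y]
    by (simp add: assms distrib_left algebra_simps)
qed simp

lemma pseudo_spline_II_mask_eq_binomial_partial_sum:
  assumes "0 < N"
  shows "pseudo_spline_II_mask N l \<xi>
       = (\<Sum>j\<le>l. real (N + l choose j) * (sin (\<xi>/2))\<^sup>2 ^ j * (cos (\<xi>/2))\<^sup>2 ^ (N + l - j))"
proof -
  obtain n where N: "N = Suc n" using assms gr0_conv_Suc by blast
  have "pseudo_spline_II_mask N l \<xi>
      = (cos (\<xi>/2))\<^sup>2 ^ Suc n * (\<Sum>j\<le>l. real (n + j choose j) * (sin (\<xi>/2))\<^sup>2 ^ j)"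
    unfolding pseudo_spline_II_mask_def N by (simp add: power_mult atLeast0AtMost power2_eq_square)
  also have "\<dots> = (\<Sum>j\<le>l. real (Suc n + l choose j) * (sin (\<xi>/2))\<^sup>2 ^ j * (cos (\<xi>/2))\<^sup>2 ^ (Suc n + l - j))"
    by (rule binomial_partial_sum_eq[symmetric]) simp
  finally show ?thesis
    unfolding N .
qed

lemma binomial_tail_le:
  fixes x y :: real
  assumes "0 \<le> x" "0 \<le> y" "x + y = 1"
  shows "(\<Sum>j=Suc l..n. (n choose j) * x^j * y^(n - j)) \<le> (\<Sum>j=Suc l..n. real (n choose j)) * x^Suc l"
proof -
  have "x^j * y^(n - j) \<le> x^Suc l" if "Suc l \<le> j" for j
  proof -
    have "x^j \<le> x^Suc l" using that assms by (intro power_decreasing) auto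
    moreover have "y^(n - j) \<le> 1" using assms by (intro power_le_one) auto
    ultimately show ?thesis
      using assms by (metis mult_mono mult.right_neutral zero_le_power zero_le_one order_trans)
  qed
  then have "(\<Sum>j=Suc l..n. (n choose j) * x^j * y^(n - j)) \<le> (\<Sum>j=Suc l..n. (n choose j) * x^Suc l)"
    by (intro sum_mono) (simp add: mult.assoc mult_left_mono)
  then show ?thesis by (simp add: sum_distrib_right)
qed

lemma sin_half_power_le:
  fixes \<xi> :: real
  shows "(sin (\<xi>/2))\<^sup>2 ^ k \<le> \<bar>\<xi>\<bar> ^ (2*k) / 2 ^ (2*k)"
proof -
  have "(sin (\<xi>/2))\<^sup>2 \<le> (\<xi>/2)\<^sup>2"
    by (metis abs_ge_zero abs_sin_x_le_abs_x power2_abs power_mono)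
  then have "(sin (\<xi>/2))\<^sup>2 ^ k \<le> ((\<xi>/2)\<^sup>2) ^ k"
    by (rule power_mono) auto
  then show ?thesis
    unfolding power_mult power2_abs by (simp add: power_divide)
qed

theorem mainTheorem3:
  fixes N l :: nat and \<xi> :: real
  assumes "0 < N" "0 < l" "l < N"
  shows "\<bar>pseudo_spline_II_mask N l \<xi>\<bar> \<ge>
           1 - ((\<Sum>j=l+1..N+l. real ((N+l) choose j)) / 2 ^ (2*l+2)) * \<bar>\<xi>\<bar> ^ (2*l+2)"
proof -
  define x where "x = (sin (\<xi>/2))\<^sup>2"
  define y where "y = (cos (\<xi>/2))\<^sup>2"
  define T where "T j = real (N + l choose j) * x^j * y^(N + l - j)" for j
  define C where "C = (\<Sum>j=Suc l..N+l. real (N + l choose j))"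
  have xy: "x + y = 1" "0 \<le> x" "0 \<le> y"
    unfolding x_def y_def by auto
  have "1 = (x + y) ^ (N + l)" using xy by simp
  also have "\<dots> = (\<Sum>j\<le>l. T j) + (\<Sum>j=Suc l..N+l. T j)"
    unfolding binomial_ring T_def
    by (subst sum.union_disjoint[symmetric]) (auto intro!: sum.cong simp: algebra_simps)
  also have "(\<Sum>j\<le>l. T j) = pseudo_spline_II_mask N l \<xi>"
    unfolding T_def x_def y_def pseudo_spline_II_mask_eq_binomial_partial_sum[OF assms(1)] ..
  finally have "1 - pseudo_spline_II_mask N l \<xi> = (\<Sum>j=Suc l..N+l. T j)"
    by simp
  also have "\<dots> \<le> C * x ^ Suc l"
    unfolding T_def C_def using xy by (intro binomial_tail_le) auto
  also have "\<dots> \<le> C * (\<bar>\<xi>\<bar> ^ (2*l+2) / 2 ^ (2*l+2))"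
    using sin_half_power_le[of \<xi> "Suc l"] unfolding x_def C_def
    by (intro mult_left_mono) (auto intro: sum_nonneg)
  finally show ?thesis
    unfolding C_def by simp
qed

end
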